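(* Let $p,q$ be odd primes with $q-p=2$, and let $D=D_1\cdots D_n$ with $D_1,\dots,D_n$ distinct primes, $2\nmid D$, $p\nmid D$, $q\nmid D$; put $\widehat{D_i}=D/D_i$. Let $E=E_+:y^2=x(x+pD)(x+qD)$, and for $d\in\mathbb{Q}(S,2)$ let $C_d: dw^2=d^2-2(p+q)Ddz^2+4D^2z^4$. (A) If $d\in\mathbb{Q}(S,2)$ satisfies $d<0$, or $p\mid d$, or $q\mid d$, then $d\notin S^{(\varphi)}(E/\mathbb{Q})$. Moreover, if $d>0$ then $C_d(\mathbb{R})\ne\emptyset$. (B) For $d=2$: (1) $C_2(\mathbb{Q}_2)\ne\emptyset$ iff $D(D-2p-2)\equiv1\pmod{16}$; (2) for each prime $l\mid pqD$, $C_2(\mathbb{Q}_l)\ne\emptyset$ iff $(\frac{2}{l})=1$, i.e. $l\equiv1,7\pmod8$. (C) For each $D_i$ ($1\le i\le n$): (1) $C_{D_i}(\mathbb{Q}_2)\ne\emptyset$ iff $D_i\equiv1\pmod4$; (2) for each prime $l\mid pq\widehat{D_i}$, $C_{D_i}(\mathbb{Q}_l)\ne\emptyset$ iff $(\frac{D_i}{l})=1$; (3) $C_{D_i}(\mathbb{Q}_{D_i})\ne\emptyset$ iff $(\frac{p\widehat{D_i}}{D_i})=(\frac{q\widehat{D_i}}{D_i})=1$.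
   Context: $(\frac{\cdot}{\cdot})$ is the Legendre symbol. $S=\{\infty,2,p,q,D_1,\dots,D_n\}$, $\mathbb{Q}(S,2)=\langle -1,2,p,q,D_1,\dots,D_n\rangle\subset\mathbb{Q}^\star/\mathbb{Q}^{\star2}$, elements represented by squarefree integers $d$ (so "$p\mid d$" refers to this representative). $\varphi:E\to E'$, $E':y^2=x^3-2(p+q)Dx^2+4D^2x$, is the $2$-isogeny $(x,y)\mapsto(y^2/x^2,\ y(pqD^2-x^2)/x^2)$, and $S^{(\varphi)}(E/\mathbb{Q})$ is the set of $d\in\mathbb{Q}(S,2)$ with $C_d(\mathbb{Q}_v)\ne\emptyset$ for all $v\in S$. *)

theory Defs
  imports "HOL-Number_Theory.Number_Theory" "HOL-Computational_Algebra.Squarefree"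
begin

text \<open>An l-adic integer is represented by a compatible sequence of integers
  x 0, x 1, ... with x (k+1) = x k (mod l^k); its value is the limit.
  A polynomial identity with integer coefficients holds in Z_l iff it holds
  modulo l^k for all k along such sequences.\<close>

definition ladic_seq :: "int \<Rightarrow> (nat \<Rightarrow> int) \<Rightarrow> bool" where
  "ladic_seq l x \<longleftrightarrow> (\<forall>k. [x (Suc k) = x k] (mod l ^ k))"

text \<open>Affine points: w = W / l^a, z = Z / l^b with
  W, Z in Z_l; clearing denominators gives the congruences below.  Points at infinity
  of the smooth model exist iff d is a square in Q_l, i.e. d l^(2a) = U^2, U in Z_l.\<close>

definition Cd_Ql :: "int \<Rightarrow> int \<Rightarrow> int \<Rightarrow> int \<Rightarrow> int \<Rightarrow> bool" where
  "Cd_Ql l p q D d \<longleftrightarrow>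
     (\<exists>a b :: nat. \<exists>W Z :: nat \<Rightarrow> int. ladic_seq l W \<and> ladic_seq l Z \<and>
        (\<forall>k. [d * (W k)^2 * l^(4*b) =
               l^(2*a) * (d^2 * l^(4*b) - 2*(p+q)*D*d * (Z k)^2 * l^(2*b) + 4*D^2 * (Z k)^4)]
             (mod l ^ k)))
   \<or> (\<exists>a :: nat. \<exists>U :: nat \<Rightarrow> int. ladic_seq l U \<and>
        (\<forall>k. [d * l^(2*a) = (U k)^2] (mod l ^ k)))"

text \<open>C_d(R) nonempty (affine real points, or points at infinity, which exist iff d > 0).\<close>

definition Cd_R :: "int \<Rightarrow> int \<Rightarrow> int \<Rightarrow> int \<Rightarrow> bool" where
  "Cd_R p q D d \<longleftrightarrow>
     (\<exists>w z :: real. of_int d * w^2 = of_int d ^ 2 - 2 * of_int (p+q) * of_int D * of_int d * z^2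
                      + 4 * of_int D ^ 2 * z^4) \<or> d > 0"

text \<open>Q(S,2) = <-1,2,p,q,D_1,...,D_n>, elements represented by squarefree integers.\<close>

definition QS2 :: "int \<Rightarrow> int \<Rightarrow> int list \<Rightarrow> int \<Rightarrow> bool" where
  "QS2 p q Ds d \<longleftrightarrow> squarefree d \<and>
     (\<forall>r. prime r \<and> r dvd d \<longrightarrow> r \<in> {2, p, q} \<union> set Ds)"

definition Selmer_phi :: "int \<Rightarrow> int \<Rightarrow> int list \<Rightarrow> int \<Rightarrow> bool" where
  "Selmer_phi p q Ds d \<longleftrightarrow> QS2 p q Ds d \<and> Cd_R p q (prod_list Ds) d \<and>
     (\<forall>l \<in> {2, p, q} \<union> set Ds. Cd_Ql l p q (prod_list Ds) d)"

end

theory Submission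
  imports Defs
begin

text \<open>Every local condition is decided by comparing l-adic valuations and unit parts.  Writing
  z = X/Y with (X, Y) primitive, a point of C_d over Q_l gives d w^2 = F_d(X,Y) up to even powers
  of l, where F_d(X,Y) = d^2 Y^4 - 2(p+q)Dd X^2 Y^2 + 4D^2 X^4.  Since q = p + 2, we have
  pq = (p+1)^2 - 1 and F_d = d^2 ((A X^2 - (p+1) Y^2)^2 - pq Y^4) whenever dA = 2D, which makes
  the valuation and the unit part of F_d(X,Y) explicit in each case: an odd total valuation
  excludes points, and otherwise d times the unit part must be a square modulo l (modulo 8 for
  l = 2), giving the residue conditions.  Conversely, Hensel's lemma lifts explicit approximate
  points (z = 0, z = 1, the points at infinity, or a Newton-corrected root of F_r(z,1)/r^2
  modulo r) to l-adic points.\<close>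

lemma cong_modulus_pow_le:
  fixes l :: int
  assumes "[a = b] (mod l^N)" "M \<le> N"
  shows "[a = b] (mod l^M)"
  using assms by (meson cong_dvd_modulus le_imp_power_dvd)

lemma prime_power_times_coprime:
  fixes l x :: int
  assumes "prime l" "x \<noteq> 0"
  obtains m y where "x = l^m * y" "\<not> l dvd y"
  using multiplicity_decompose'[OF assms(2), of l] assms(1) by (metis not_prime_unit)

lemma dvd_if_pow_Suc_dvd_pow_mult:
  fixes l x :: int
  assumes "l \<noteq> 0" "l^(n+1) dvd l^n * x"
  shows "l dvd x"
  using assms by (simp add: dvd_times_left_cancel_iff mult.assoc)

lemma not_dvd_if_dvd_diff:
  fixes l a b :: int
  assumes "l dvd a - b" "\<not> l dvd b"
  shows "\<not> l dvd a"
proof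
  assume "l dvd a"
  then have "l dvd a - (a - b)" using assms(1) by (rule dvd_diff)
  then show False using assms(2) by simp
qed

lemma prime_not_dvd_two:
  fixes l :: int
  assumes "prime l" "l \<noteq> 2"
  shows "\<not> l dvd 2"
  using assms primes_dvd_imp_eq[OF assms(1), of 2] by auto

lemma odd_square_mod_8:
  fixes x :: int
  assumes "odd x"
  obtains t where "x^2 = 8*t + 1"
proof -
  obtain s where s: "x = 2*s + 1" using assms by (metis oddE)
  obtain v where v: "s*(s+1) = 2*v" by (metis dvd_def even_mult_iff odd_even_add odd_one)
  have "x^2 = 8*v + 1" unfolding s using v by (simp add: power2_eq_square algebra_simps)
  then show ?thesis using that by blast
qed

lemma Legendre_eq_1_iff:
  "Legendre a l = 1 \<longleftrightarrow> \<not> l dvd a \<and> (\<exists>x. [x^2 = a] (mod l))"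
  by (auto simp: Legendre_def QuadRes_def cong_0_iff)

lemma Legendre_eq_1_if_dvd_diff_squares:
  fixes l a x y :: int
  assumes l: "prime l" and a: "\<not> l dvd a" and y: "\<not> l dvd y" and d: "l dvd x^2 - a*y^2"
  shows "Legendre a l = 1"
proof -
  have "coprime y l" using prime_imp_coprime[OF l y] by (simp add: coprime_commute)
  then obtain i where i: "[y*i = 1] (mod l)" using cong_solve_coprime_int by blast
  have "[a * 1^2 = a * (y*i)^2] (mod l)"
    using i by (intro cong_mult cong_refl cong_pow) (rule cong_sym)
  also have "a * (y*i)^2 = (a*y^2) * i^2" by (simp add: power_mult_distrib)
  also have "[(a*y^2) * i^2 = x^2 * i^2] (mod l)"
    using d by (intro cong_mult cong_refl) (simp add: cong_iff_dvd_diff dvd_diff_commute)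
  also have "x^2 * i^2 = (x*i)^2" by (simp add: power_mult_distrib)
  finally have "[(x*i)^2 = a] (mod l)" by (simp add: cong_sym)
  then show ?thesis using a by (auto simp: Legendre_eq_1_iff)
qed

text \<open>Gauss's lemma: the doubles 2x with 0 < x \<le> (l-1)/2 that exceed (l-1)/2 are those
  with x > (l-1)/4.\<close>

lemma Legendre_two_iff:
  fixes l :: int
  assumes l: "prime l" "l > 2"
  shows "Legendre 2 l = 1 \<longleftrightarrow> l mod 8 = 1 \<or> l mod 8 = 7"
proof -
  have nl: "prime (nat l)" "2 < nat l" using l by (auto simp: prime_nat_iff_prime)
  have n2: "[2 \<noteq> 0] (mod int (nat l))"
    using l prime_not_dvd_two[of l] by (simp add: cong_0_iff)
  interpret G: GAUSS "nat l" 2 using nl n2 by unfold_locales auto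
  define h where "h = (l - 1) div 2"
  have hl: "2*h < l" "0 \<le> h" using l unfolding h_def by auto
  have "G.E = (\<lambda>x. (x*2) mod l) ` {0<..h} \<inter> {h<..}"
    using l by (simp add: G.E_def G.C_def G.B_def G.A_def h_def image_image)
  also have "(\<lambda>x. (x*2) mod l) ` {0<..h} = (\<lambda>x. 2*x) ` {0<..h}"
    by (intro image_cong refl) (use hl in auto)
  also have "(\<lambda>x. 2*x) ` {0<..h} \<inter> {h<..} = (\<lambda>x. 2*x) ` {h div 2<..h}"
    using hl by (auto simp: image_iff)
  finally have "card G.E = card {h div 2<..h}"
    by (simp add: card_image inj_on_def)
  then have Lg: "Legendre 2 l = (-1) ^ nat (h - h div 2)"
    using G.gauss_lemma l by simp
  have "odd l" using l by (metis prime_odd_int)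
  define k where "k = l div 8"
  define j where "j = l mod 8"
  have kj: "l = 8*k + j" "0 \<le> j" "j < 8" "k \<ge> 0" using l unfolding k_def j_def by auto
  have j: "j = 1 \<or> j = 3 \<or> j = 5 \<or> j = 7" using kj \<open>odd l\<close> by presburger
  have "nat (h - h div 2) = (if j = 1 then 2 * nat k else if j = 7 then 2 * nat k + 2
      else 2 * nat k + 1)"
    using j kj unfolding h_def by auto
  then show ?thesis using Lg j unfolding j_def by (auto simp: power_add power_mult)
qed

lemma unit_parts_cong:
  fixes l x y :: int
  assumes l: "prime l" and x: "\<not> l dvd x" and y: "\<not> l dvd y"
    and cg: "[l^a * x = l^b * y] (mod l^N)" and bN: "b < N"
  shows "a = b \<and> [x = y] (mod l^(N - b))"
proof -
  have l0: "l \<noteq> 0" using l by auto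
  have diff: "l^n dvd l^a * x - l^b * y" if "n \<le> N" for n
    using cong_modulus_pow_le[OF cg that] by (simp add: cong_iff_dvd_diff)
  have "\<not> a < b"
  proof
    assume "a < b"
    then have high: "l^(a+1) dvd l^b * y" by (intro dvd_mult2 le_imp_power_dvd) simp
    have "l^(a+1) dvd l^a * x" using dvd_add[OF diff[of "a+1"] high] \<open>a < b\<close> bN by simp
    then show False using dvd_if_pow_Suc_dvd_pow_mult[OF l0] x by blast
  qed
  moreover have "\<not> b < a"
  proof
    assume "b < a"
    then have high: "l^(b+1) dvd l^a * x" by (intro dvd_mult2 le_imp_power_dvd) simp
    have "l^(b+1) dvd l^b * y" using dvd_diff[OF high diff[of "b+1"]] bN by simp
    then show False using dvd_if_pow_Suc_dvd_pow_mult[OF l0] y by blast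
  qed
  ultimately have ab: "a = b" by simp
  have "l^b * l^(N - b) dvd l^b * (x - y)"
    using diff[of N] ab bN by (simp add: right_diff_distrib flip: power_add)
  then have "l^(N - b) dvd x - y" using l0 by (simp add: dvd_times_left_cancel_iff)
  then show ?thesis using ab by (simp add: cong_iff_dvd_diff)
qed

lemma unit_times_square_cong:
  fixes l c u W :: int
  assumes l: "prime l" and c: "\<not> l dvd c" and u: "\<not> l dvd u"
    and cg: "[c * W^2 * l^s = l^t * u] (mod l^N)" and N: "t + 3 \<le> N"
  shows "even (s + t) \<and> (\<exists>w. \<not> l dvd w \<and> [c * w^2 = u] (mod l^3))"
proof -
  have cg': "[c * W^2 * l^s = l^t * u] (mod l^(t+3))" using cong_modulus_pow_le[OF cg N] .
  have "W \<noteq> 0"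
  proof
    assume "W = 0"
    then have "[0 = l^t * u] (mod l^(t+1))" using cong_modulus_pow_le[OF cg', of "t+1"] by simp
    then have "l^(t+1) dvd l^t * u" by (subst (asm) cong_sym_eq) (simp only: cong_0_iff)
    then show False using dvd_if_pow_Suc_dvd_pow_mult u l by (metis not_prime_0)
  qed
  then obtain m w where W: "W = l^m * w" and w: "\<not> l dvd w"
    using prime_power_times_coprime[OF l] by blast
  have "c * W^2 * l^s = l^(2*m+s) * (c * w^2)"
    by (simp add: W power_mult_distrib power_add power_mult algebra_simps)
  with cg' have "[l^(2*m+s) * (c * w^2) = l^t * u] (mod l^(t+3))" by metis
  moreover have "\<not> l dvd c * w^2" using c w l by (simp add: prime_dvd_mult_iff prime_dvd_power_iff)
  ultimately have "2*m+s = t \<and> [c * w^2 = u] (mod l^3)"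
    using unit_parts_cong[OF l _ u] by fastforce
  moreover have "even (s + t)" if "2*m+s = t" using that by presburger
  ultimately show ?thesis using w by blast
qed

lemma ladic_seq_const: "ladic_seq l (\<lambda>k. z)"
  unfolding ladic_seq_def by simp

lemma ladic_seq_mult: "ladic_seq l S \<Longrightarrow> ladic_seq l (\<lambda>k. c * S k)"
  unfolding ladic_seq_def by (auto intro: cong_mult cong_refl)

lemma ladic_seq_iterate:
  fixes l :: int
  assumes "P 0 x0" and step: "\<And>n x. P n x \<Longrightarrow> \<exists>y. P (Suc n) y \<and> [y = x] (mod l^n)"
  shows "\<exists>W. ladic_seq l W \<and> (\<forall>n. P n (W n))"
proof -
  obtain f where f: "\<And>n x. P n x \<Longrightarrow> P (Suc n) (f n x) \<and> [f n x = x] (mod l^n)"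
    using step by metis
  define W where "W = rec_nat x0 f"
  have PW: "P n (W n)" for n
    by (induction n) (use assms(1) f in \<open>auto simp: W_def\<close>)
  then have "ladic_seq l W" unfolding ladic_seq_def using f by (auto simp: W_def)
  then show ?thesis using PW by blast
qed

text \<open>Hensel's lemma for square roots: the Newton step x + (u - x^2)/(2x) is realised with an
  inverse i of 2x modulo l (and, for l = 2, by the correction x + (u - x^2)/2).\<close>

lemma ladic_sqrt_odd:
  fixes l u x0 :: int
  assumes l: "prime l" "l \<noteq> 2" and u: "\<not> l dvd u" and x0: "[x0^2 = u] (mod l)"
  shows "\<exists>W. ladic_seq l W \<and> (\<forall>k. [(W k)^2 = u] (mod l^k))"
proof -
  have step: "\<exists>y. [y^2 = u] (mod l^(Suc n + 1)) \<and> [y = x] (mod l^n)"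
    if hx: "[x^2 = u] (mod l^(n+1))" for n x
  proof -
    obtain m where m: "u - x^2 = l^(n+1) * m"
      using cong_sym[OF hx] unfolding cong_iff_dvd_diff by (rule dvdE)
    have "l dvd x^2 - u" using cong_modulus_pow_le[OF hx, of 1] by (simp add: cong_iff_dvd_diff)
    then have "\<not> l dvd x^2" using u dvd_diff[of l "x^2" "x^2 - u"] by auto
    then have "\<not> l dvd 2*x"
      using prime_not_dvd_two[OF l] l(1) by (auto simp: prime_dvd_mult_iff prime_dvd_power_iff)
    then have "coprime (2*x) l" using prime_imp_coprime[OF l(1)] coprime_commute by blast
    then obtain i where "[2*x*i = 1] (mod l)" using cong_solve_coprime_int by blast
    then obtain r where r: "2*x*i - 1 = l*r" unfolding cong_iff_dvd_diff by (rule dvdE)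
    define L where "L = l^(n+1)"
    define y where "y = x + m*i*L"
    have "y^2 - u = L*m*(2*x*i - 1) + (m*i)^2 * (L*L)"
      using m unfolding y_def L_def by (simp add: power2_eq_square algebra_simps)
    also have "\<dots> = l^(Suc n + 1) * (m*r + (m*i)^2 * l^n)"
      unfolding r L_def by (simp add: power2_eq_square algebra_simps)
    finally have "[y^2 = u] (mod l^(Suc n+1))" unfolding cong_iff_dvd_diff by (rule dvdI)
    moreover have "[y = x] (mod l^n)" unfolding y_def cong_iff_dvd_diff L_def by simp
    ultimately show ?thesis by blast
  qed
  obtain W where W: "ladic_seq l W" "\<forall>n. [(W n)^2 = u] (mod l^(n+1))"
    using ladic_seq_iterate[where P="\<lambda>n x. [x^2 = u] (mod l^(n+1))", OF _ step] x0 by auto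
  then show ?thesis by (meson cong_modulus_pow_le le_add1)
qed

lemma ladic_sqrt_two:
  fixes u x0 :: int
  assumes u: "odd u" and x0: "[x0^2 = u] (mod 8)"
  shows "\<exists>W. ladic_seq 2 W \<and> (\<forall>k. [(W k)^2 = u] (mod 2^k))"
proof -
  have step: "\<exists>y. [y^2 = u] (mod 2^(Suc n + 3)) \<and> [y = x] (mod 2^n)"
    if hx: "[x^2 = u] (mod 2^(n+3))" for n x
  proof -
    obtain m where m: "u - x^2 = 2^(n+3) * m"
      using cong_sym[OF hx] unfolding cong_iff_dvd_diff by (rule dvdE)
    have "even (u - x^2)" using m by (simp add: power_add)
    then have "odd x" using u by auto
    then obtain r where r: "x - 1 = 2*r" by (metis dvdE odd_one odd_even_add diff_add_cancel)
    define L where "L = (2::int)^(n+2)"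
    define y where "y = x + m*L"
    have "y^2 - u = (2*L)*m*(x - 1) + m^2 * (L*L)"
      using m unfolding y_def L_def by (simp add: power2_eq_square power_add algebra_simps)
    also have "\<dots> = 2^(Suc n + 3) * (m*r + m^2 * 2^n)"
      unfolding r L_def by (simp add: power2_eq_square power_add algebra_simps)
    finally have "[y^2 = u] (mod 2^(Suc n+3))" unfolding cong_iff_dvd_diff by (rule dvdI)
    moreover have "[y = x] (mod 2^n)" unfolding y_def cong_iff_dvd_diff L_def by simp
    ultimately show ?thesis by blast
  qed
  obtain W where W: "ladic_seq 2 W" "\<forall>n. [(W n)^2 = u] (mod 2^(n+3))"
    using ladic_seq_iterate[where P="\<lambda>n x. [x^2 = u] (mod 2^(n+3))", OF _ step] x0 by auto
  then show ?thesis by (meson cong_modulus_pow_le le_add1)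
qed

definition quartic_form :: "int \<Rightarrow> int \<Rightarrow> int \<Rightarrow> int \<Rightarrow> int \<Rightarrow> int \<Rightarrow> int" where
  "quartic_form p q D d X Y = d^2 * Y^4 - 2*(p+q)*D*d*X^2*Y^2 + 4*D^2*X^4"

lemma quartic_form_homogeneous:
  "quartic_form p q D d (t*X) (t*Y) = t^4 * quartic_form p q D d X Y"
  by (simp add: quartic_form_def algebra_simps power_mult_distrib)

text \<open>For twin primes pq = (p+1)^2 - 1, so the quartic is a square minus pq Y^4.\<close>

lemma quartic_form_twin:
  assumes "q = p + 2" "d * A = 2 * D"
  shows "quartic_form p q D d X Y = d^2 * ((A*X^2 - (p+1)*Y^2)^2 - p*q*Y^4)"
proof -
  have "quartic_form p q D d X Y = d^2 * Y^4 - (p+q)*d*(2*D)*X^2*Y^2 + (2*D)^2*X^4"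
    by (simp add: quartic_form_def power2_eq_square algebra_simps)
  also have "\<dots> = d^2 * ((A*X^2 - (p+1)*Y^2)^2 - p*q*Y^4)"
    unfolding assms(2)[symmetric] assms(1) by (simp add: power2_eq_square power4_eq_xxxx algebra_simps)
  finally show ?thesis .
qed

lemma Cd_QlI_affine:
  assumes S: "ladic_seq l S" "\<forall>k. [(S k)^2 = m] (mod l^k)"
    and e: "d * \<kappa>^2 * m = quartic_form p q D d z 1"
  shows "Cd_Ql l p q D d"
proof -
  have "[d * (\<kappa> * S k)^2 * l^(4*0) =
          l^(2*0) * (d^2 * l^(4*0) - 2*(p+q)*D*d * z^2 * l^(2*0) + 4*D^2 * z^4)] (mod l ^ k)" for k
  proof -
    have "[d*\<kappa>^2 * (S k)^2 = d*\<kappa>^2 * m] (mod l^k)" using S(2) by (intro cong_mult cong_refl) auto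
    then show ?thesis using e by (simp add: quartic_form_def power_mult_distrib mult_ac)
  qed
  then show ?thesis unfolding Cd_Ql_def using ladic_seq_mult[OF S(1)] ladic_seq_const by blast
qed

lemma Cd_QlI_infinity:
  assumes U: "ladic_seq l U" "\<forall>k. [(U k)^2 = d] (mod l^k)"
  shows "Cd_Ql l p q D d"
proof -
  have "\<forall>k. [d * l^(2*0) = (U k)^2] (mod l ^ k)" using U(2) by (simp add: cong_sym_eq)
  then show ?thesis unfolding Cd_Ql_def using U(1) by blast
qed

lemma Cd_Ql_if_Legendre:
  assumes l: "prime l" "l \<noteq> 2" and "Legendre d l = 1"
  shows "Cd_Ql l p q D d"
proof -
  obtain y where "\<not> l dvd d" "[y^2 = d] (mod l)" using assms(3) by (auto simp: Legendre_eq_1_iff)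
  from ladic_sqrt_odd[OF l this] show ?thesis by (blast intro: Cd_QlI_infinity)
qed

text \<open>A point of C_d(Q_l) with z = X/Y gives, after clearing denominators, congruences
  d W^2 l^s = l^t F_d(X,Y) with s, t even; forces_at l d v G says that each such congruence
  with v = F_d(X,Y) implies G.  The margin 10 exceeds by 3 every valuation of F_d(X,Y)
  occurring below, as unit_times_square_cong requires.\<close>

definition forces_at :: "int \<Rightarrow> int \<Rightarrow> int \<Rightarrow> bool \<Rightarrow> bool" where
  "forces_at l d v G \<longleftrightarrow> (\<forall>W s t. even s \<longrightarrow> even t \<longrightarrow>
      [d * W^2 * l^s = l^t * v] (mod l^(t+10)) \<longrightarrow> G)"

lemma forces_atI:
  fixes l d c u :: int
  assumes l: "prime l" and d: "d = l^e * c" and c: "\<not> l dvd c"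
    and v: "v = l^h * u" and u: "\<not> l dvd u" and h: "h \<le> 7"
    and G: "even (e + h) \<Longrightarrow> \<exists>w. \<not> l dvd w \<and> [c * w^2 = u] (mod l^3) \<Longrightarrow> G"
  shows "forces_at l d v G"
  unfolding forces_at_def
proof (intro allI impI)
  fix W s t assume "even (s::nat)" "even (t::nat)" and cg: "[d * W^2 * l^s = l^t * v] (mod l^(t+10))"
  have "[c * W^2 * l^(s+e) = l^(t+h) * u] (mod l^(t+10))"
    using cg d v by (simp add: power_add mult_ac)
  then have "even (s+e+(t+h)) \<and> (\<exists>w. \<not> l dvd w \<and> [c * w^2 = u] (mod l^3))"
    by (rule unit_times_square_cong[OF l c u]) (use h in simp)
  then show G using G \<open>even s\<close> \<open>even t\<close> by auto
qed

lemma forces_at_odd_valuation: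
  fixes l d c u :: int
  assumes "prime l" "d = l^e * c" "\<not> l dvd c" "v = l^h * u" "\<not> l dvd u" "h \<le> 7"
    and "odd (e + h)"
  shows "forces_at l d v G"
  using forces_atI[OF assms(1-6)] assms(7) by blast

lemma forces_at_Legendre:
  fixes l c u v r :: int
  assumes l: "prime l" and c: "\<not> l dvd c" and v: "v = l^h * u" and h: "h \<le> 7"
    and ur: "l dvd u - r^2" and r: "\<not> l dvd r"
  shows "forces_at l c v (Legendre c l = 1)"
proof (rule forces_atI[OF l _ c v _ h])
  show "c = l^0 * c" by simp
  show u: "\<not> l dvd u" using not_dvd_if_dvd_diff[OF ur] r l by (simp add: prime_dvd_power_iff)
next
  assume "\<exists>w. \<not> l dvd w \<and> [c * w^2 = u] (mod l^3)"
  then obtain w where w: "\<not> l dvd w" "[c * w^2 = u] (mod l)"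
    using cong_modulus_pow_le[of _ _ l 3 1] by fastforce
  have "l dvd r^2 - c * w^2"
    using ur w(2) by (metis cong_iff_dvd_diff cong_sym cong_trans)
  then show "Legendre c l = 1" using Legendre_eq_1_if_dvd_diff_squares[OF l c w(1)] by blast
qed

lemma forces_at_affine_point:
  fixes l d p q D :: int
  assumes l: "prime l"
    and cg: "\<forall>k. [d * (W k)^2 * l^(4*b) =
               l^(2*a) * (d^2 * l^(4*b) - 2*(p+q)*D*d * (Z k)^2 * l^(2*b) + 4*D^2 * (Z k)^4)]
             (mod l ^ k)"
    and integral: "\<And>X. forces_at l d (quartic_form p q D d X 1) G"
    and nonintegral: "\<And>X j. \<not> l dvd X \<Longrightarrow> 1 \<le> j \<Longrightarrow> forces_at l d (quartic_form p q D d X (l^j)) G"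
  shows G
proof -
  define K where "K = 2*a + 4*b + 10"
  define X0 where "X0 = Z K"
  have cgK: "[d * (W K)^2 * l^(4*b) = l^(2*a) * quartic_form p q D d X0 (l^b)] (mod l^K)"
    using cg[rule_format, of K] unfolding X0_def quartic_form_def
    by (simp add: power_mult[symmetric] mult.commute)
  show G
  proof (cases "l^b dvd X0")
    case True
    then obtain X where X: "X0 = l^b * X" by blast
    have "quartic_form p q D d X0 (l^b) = l^(4*b) * quartic_form p q D d X 1"
      using quartic_form_homogeneous[of p q D d "l^b" X 1] X
      by (simp add: power_mult[symmetric] mult.commute)
    then have "[d * (W K)^2 * l^(4*b) = l^(2*a+4*b) * quartic_form p q D d X 1] (mod l^(2*a+4*b+10))"
      using cgK unfolding K_def by (simp add: power_add mult.assoc)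
    then show G using integral[of X] unfolding forces_at_def by (meson dvd_add even_mult_iff even_numeral)
  next
    case False
    then have "X0 \<noteq> 0" by auto
    then obtain m X where X: "X0 = l^m * X" "\<not> l dvd X" using prime_power_times_coprime[OF l] by blast
    have "m < b" using False X by (metis le_imp_power_dvd dvd_mult2 not_less)
    define j where "j = b - m"
    have bj: "b = m + j" and j1: "1 \<le> j" using \<open>m < b\<close> unfolding j_def by auto
    have "quartic_form p q D d X0 (l^b) = l^(4*m) * quartic_form p q D d X (l^j)"
      using quartic_form_homogeneous[of p q D d "l^m" X "l^j"] X bj
      by (simp add: power_add power_mult[symmetric] mult.commute)
    then have "[d * (W K)^2 * l^(4*b) = l^(2*a+4*m) * quartic_form p q D d X (l^j)] (mod l^K)"
      using cgK by (simp add: power_add mult.assoc)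
    then have "[d * (W K)^2 * l^(4*b) = l^(2*a+4*m) * quartic_form p q D d X (l^j)] (mod l^(2*a+4*m+10))"
      by (rule cong_modulus_pow_le) (use \<open>m < b\<close> in \<open>simp add: K_def\<close>)
    then show G using nonintegral[OF X(2) j1] unfolding forces_at_def
      by (meson dvd_add even_mult_iff even_numeral)
  qed
qed

lemma Cd_QlE:
  fixes l d c p q D :: int
  assumes l: "prime l" and C: "Cd_Ql l p q D d"
    and d: "d = l^e * c" and c: "\<not> l dvd c"
    and infinity: "even e \<Longrightarrow> \<exists>w. \<not> l dvd w \<and> [w^2 = c] (mod l^3) \<Longrightarrow> G"
    and integral: "\<And>X. forces_at l d (quartic_form p q D d X 1) G"
    and nonintegral: "\<And>X j. \<not> l dvd X \<Longrightarrow> 1 \<le> j \<Longrightarrow> forces_at l d (quartic_form p q D d X (l^j)) G"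
  shows G
  using C unfolding Cd_Ql_def
proof (elim disjE exE conjE)
  fix a b W Z
  assume "\<forall>k. [d * (W k)^2 * l^(4*b) =
               l^(2*a) * (d^2 * l^(4*b) - 2*(p+q)*D*d * (Z k)^2 * l^(2*b) + 4*D^2 * (Z k)^4)]
             (mod l ^ k)"
  from forces_at_affine_point[OF l this integral nonintegral] show G .
next
  fix a U
  assume "\<forall>k. [d * l^(2*a) = (U k)^2] (mod l ^ k)"
  then have "[d * l^(2*a) = (U (2*a+e+3))^2] (mod l^(2*a+e+3))" by blast
  then have "[1 * (U (2*a+e+3))^2 * l^0 = l^(2*a+e) * c] (mod l^(2*a+e+3))"
    using d by (simp add: cong_sym_eq power_add mult_ac)
  moreover have "\<not> l dvd 1" using l not_prime_unit by blast
  ultimately have "even (0 + (2*a+e)) \<and> (\<exists>w. \<not> l dvd w \<and> [1 * w^2 = c] (mod l^3))"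
    using unit_times_square_cong[OF l _ c] by blast
  then show G using infinity by simp
qed

lemma not_Cd_Ql_if_exactly_divides:
  fixes l p q D d :: int
  assumes l: "prime l" "l \<noteq> 2" and ld: "l dvd d" and sq: "\<not> l^2 dvd d" and lD: "\<not> l dvd D"
  shows "\<not> Cd_Ql l p q D d"
proof
  assume C: "Cd_Ql l p q D d"
  obtain c where d: "d = l^1 * c" using ld by auto
  have c: "\<not> l dvd c" using sq d by (auto simp: power2_eq_square)
  have unit: "\<not> l dvd quartic_form p q D d X Y" if "\<not> l dvd X" for X Y
  proof (rule not_dvd_if_dvd_diff)
    have "quartic_form p q D d X Y - (2*D*X^2)^2 = d * (d*Y^4 - 2*(p+q)*D*X^2*Y^2)"
      unfolding quartic_form_def by (simp add: power2_eq_square power4_eq_xxxx algebra_simps)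
    then show "l dvd quartic_form p q D d X Y - (2*D*X^2)^2" using ld by simp
    show "\<not> l dvd (2*D*X^2)^2"
      using prime_not_dvd_two[OF l] lD that l(1) by (simp add: prime_dvd_mult_iff prime_dvd_power_iff)
  qed
  have forces: "forces_at l d (quartic_form p q D d X Y) False" if "\<not> l dvd X" for X Y
    using forces_at_odd_valuation[where h=0, OF l(1) d c] unit[OF that] by simp
  show False
  proof (rule Cd_QlE[OF l(1) C d c])
    fix X
    show "forces_at l d (quartic_form p q D d X 1) False"
    proof (cases "l dvd X")
      case True
      then obtain X1 where X1: "X = l * X1" by blast
      define u where "u = c^2 - 2*(p+q)*D*c*l*X1^2 + 4*D^2*l^2*X1^4"
      have "quartic_form p q D d X 1 = l^2 * u"
        unfolding quartic_form_def u_def X1 d by (simp add: power2_eq_square power4_eq_xxxx algebra_simps)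
      moreover have "\<not> l dvd u"
      proof (rule not_dvd_if_dvd_diff)
        have "u - c^2 = l * (- 2*(p+q)*D*c*X1^2 + 4*D^2*l*X1^4)"
          unfolding u_def by (simp add: power2_eq_square power4_eq_xxxx algebra_simps)
        then show "l dvd u - c^2" by simp
        show "\<not> l dvd c^2" using c l(1) by (simp add: prime_dvd_power_iff)
      qed
      ultimately show ?thesis using forces_at_odd_valuation[OF l(1) d c] by simp
    qed (rule forces)
  qed (simp_all add: forces)
qed

text \<open>If l divides pq exactly, c^2 (V^2 - pq) is either a unit congruent to (cV)^2 or has
  valuation 1; if l divides A, it is congruent to c^2 because pq = (p+1)^2 - 1.\<close>

lemma forces_at_Legendre_integral:
  fixes l c p q A X :: int
  assumes l: "prime l" and c: "\<not> l dvd c" and q: "q = p + 2"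
    and cases: "(l dvd p*q \<and> \<not> l^2 dvd p*q) \<or> (l dvd A \<and> \<not> l dvd p*q)"
  shows "forces_at l c (c^2 * ((A*X^2 - (p+1))^2 - p*q)) (Legendre c l = 1)"
proof -
  define V where "V = A*X^2 - (p+1)"
  consider "l dvd p*q" "\<not> l^2 dvd p*q" "\<not> l dvd V" | "l dvd p*q" "\<not> l^2 dvd p*q" "l dvd V"
    | "l dvd A" "\<not> l dvd p*q" using cases by blast
  then have "forces_at l c (c^2 * (V^2 - p*q)) (Legendre c l = 1)"
  proof cases
    case 1
    have "c^2 * (V^2 - p*q) - (c*V)^2 = p*q * (- (c^2))" by (simp add: power_mult_distrib algebra_simps)
    then have "l dvd c^2 * (V^2 - p*q) - (c*V)^2" using 1(1) by simp
    moreover have "\<not> l dvd c*V" using 1(3) l c by (simp add: prime_dvd_mult_iff)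
    ultimately show ?thesis by (intro forces_at_Legendre[where h=0, OF l c]) simp_all
  next
    case 2
    obtain V1 m where V1: "V = l*V1" and m: "p*q = l*m" using 2 by blast
    have "\<not> l dvd m" using 2(2) m by (auto simp: power2_eq_square)
    have "c^2 * (V^2 - p*q) = l^1 * (c^2 * (l*V1^2 - m))"
      unfolding V1 m by (simp add: power2_eq_square algebra_simps)
    moreover have "\<not> l dvd c^2 * (l*V1^2 - m)"
      using c \<open>\<not> l dvd m\<close> l dvd_add_right_iff[of l "l*V1^2" "-m"]
      by (simp add: prime_dvd_mult_iff prime_dvd_power_iff)
    ultimately show ?thesis by (intro forces_at_odd_valuation[where e=0 and h=1, OF l _ c]) simp_all
  next
    case 3
    have "c^2 * (V^2 - p*q) - c^2 = A * (c^2 * X^2 * (A*X^2 - 2*(p+1)))"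
      unfolding V_def q by (simp add: power2_eq_square algebra_simps)
    then have "l dvd c^2 * (V^2 - p*q) - c^2" using 3(1) by (metis dvd_mult2)
    then show ?thesis using c by (intro forces_at_Legendre[where h=0, OF l c]) simp_all
  qed
  then show ?thesis unfolding V_def .
qed

lemma forces_at_Legendre_nonintegral:
  fixes l c p q A X :: int
  assumes l: "prime l" and c: "\<not> l dvd c" and X: "\<not> l dvd X" and j: "1 \<le> j"
    and A: "\<not> l^2 dvd A"
  shows "forces_at l c (c^2 * ((A*X^2 - (p+1)*(l^j)^2)^2 - p*q*(l^j)^4)) (Legendre c l = 1)"
proof -
  define M where "M = l^(2*j - 1)"
  have Y2: "(l^j)^2 = l*M"
    unfolding M_def using j by (simp add: power_mult[symmetric] mult.commute flip: power_Suc)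
  have "(l^j)^4 = ((l^j)^2)^2" by (simp add: mult.commute flip: power_mult)
  then have Y4: "(l^j)^4 = l^2*M^2" using Y2 by (simp add: power_mult_distrib)
  have M: "l dvd M" unfolding M_def using j by simp
  show ?thesis
  proof (cases "l dvd A")
    case False
    define V where "V = A*X^2 - (p+1)*(l*M)"
    have "c^2 * (V^2 - p*q*(l^2*M^2)) - (c*V)^2 = l * (-(c^2*p*q*l*M^2))"
      by (simp add: power_mult_distrib power2_eq_square algebra_simps)
    then have "l dvd c^2 * (V^2 - p*q*(l^2*M^2)) - (c*V)^2" by simp
    moreover have "\<not> l dvd c*V"
    proof -
      have "\<not> l dvd V"
        by (rule not_dvd_if_dvd_diff[of l V "A*X^2"])
           (use l X False in \<open>simp_all add: V_def prime_dvd_mult_iff prime_dvd_power_iff\<close>)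
      then show ?thesis using c l by (simp add: prime_dvd_mult_iff)
    qed
    ultimately show ?thesis unfolding Y2 Y4 V_def
      by (intro forces_at_Legendre[where h=0 and r="c*V", OF l c]) (simp_all add: V_def)
  next
    case True
    then obtain A1 where A1: "A = l*A1" by blast
    have "\<not> l dvd A1" using A A1 by (auto simp: power2_eq_square)
    define u where "u = c^2 * ((A1*X^2 - (p+1)*M)^2 - p*q*M^2)"
    have "c^2 * ((A*X^2 - (p+1)*(l*M))^2 - p*q*(l^2*M^2)) = l^2 * u"
      unfolding u_def A1 by (simp add: power2_eq_square algebra_simps)
    moreover have "u - (c*A1*X^2)^2 = M * (c^2 * ((p+1)^2*M - 2*A1*X^2*(p+1) - p*q*M))"
      unfolding u_def by (simp add: power_mult_distrib power2_eq_square algebra_simps)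
    moreover have "\<not> l dvd c*A1*X^2"
      using l c X \<open>\<not> l dvd A1\<close> by (simp add: prime_dvd_mult_iff prime_dvd_power_iff)
    ultimately show ?thesis unfolding Y2 Y4 using M
      by (intro forces_at_Legendre[where h=2 and u=u and r="c*A1*X^2", OF l c]) simp_all
  qed
qed

lemma Legendre_eq_1_if_Cd_Ql:
  fixes l p q D c A :: int
  assumes l: "prime l" and c: "\<not> l dvd c" and q: "q = p + 2" and A: "c * A = 2 * D"
    and cases: "(l dvd p*q \<and> \<not> l^2 dvd p*q \<and> \<not> l dvd A) \<or> (l dvd A \<and> \<not> l^2 dvd A \<and> \<not> l dvd p*q)"
    and C: "Cd_Ql l p q D c"
  shows "Legendre c l = 1"
proof (rule Cd_QlE[OF l C _ c])
  show "c = l^0 * c" by simp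
next
  assume "\<exists>w. \<not> l dvd w \<and> [w^2 = c] (mod l^3)"
  then obtain w where "[w^2 = c] (mod l)" using cong_modulus_pow_le[of _ _ l 3 1] by fastforce
  moreover have "\<not> l dvd 1" using l not_prime_unit by blast
  ultimately show "Legendre c l = 1"
    using Legendre_eq_1_if_dvd_diff_squares[where x=w and y=1, OF l c] by (simp add: cong_iff_dvd_diff)
next
  fix X
  show "forces_at l c (quartic_form p q D c X 1) (Legendre c l = 1)"
    using forces_at_Legendre_integral[OF l c q, of A X] cases unfolding quartic_form_twin[OF q A] by auto
next
  fix X and j :: nat
  assume "\<not> l dvd X" "1 \<le> j"
  have "\<not> l^2 dvd A" using cases by (auto simp: power2_eq_square)
  from forces_at_Legendre_nonintegral[OF l c \<open>\<not> l dvd X\<close> \<open>1 \<le> j\<close> this]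
  show "forces_at l c (quartic_form p q D c X (l^j)) (Legendre c l = 1)"
    unfolding quartic_form_twin[OF q A] .
qed

lemma forces_at_cong_16:
  fixes p q D X :: int
  assumes q: "q = p + 2" and p: "odd p" and D: "odd D" and X: "odd X"
  shows "forces_at 2 2 (2^2 * ((D*X^2 - (p+1))^2 - p*q)) ([D*(D - 2*p - 2) = 1] (mod 16))"
proof -
  obtain t where t: "X^2 = 8*t + 1" using odd_square_mod_8[OF X] .
  obtain s where s: "D^2 = 8*s + 1" using odd_square_mod_8[OF D] .
  obtain P where P: "p + 1 = 2*P" using p by (metis dvd_def odd_even_add odd_one)
  define a where "a = t*D*(D - p - 1) + 4*t^2*D^2"
  define b where "b = 2*s - P*D"
  have "D*(D - 2*p - 2) = D^2 - 2*D*(p+1)" by (simp add: power2_eq_square algebra_simps)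
  also have "\<dots> = 1 + 4*b" unfolding s P b_def by (simp add: algebra_simps)
  finally have N: "D*(D - 2*p - 2) = 1 + 4*b" .
  have "(D*X^2 - (p+1))^2 - p*q = D*(D - 2*p - 2) + 1 + 16*a"
    unfolding t q a_def by (simp add: power2_eq_square algebra_simps)
  then have G: "2^2 * ((D*X^2 - (p+1))^2 - p*q) = 2^3 * (1 + 2*b + 8*a)" using N by simp
  show ?thesis
  proof (rule forces_atI[where e=1 and c=1, OF _ _ _ G])
    assume "\<exists>w. \<not> 2 dvd w \<and> [1 * w^2 = 1 + 2*b + 8*a] (mod 2^3)"
    then obtain w where "odd w" "[w^2 = 1 + 2*b + 8*a] (mod 8)" by auto
    moreover obtain r where "w^2 = 8*r + 1" using odd_square_mod_8[OF \<open>odd w\<close>] .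
    ultimately have "8 dvd (8*r + 1) - (1 + 2*b + 8*a)" by (simp add: cong_iff_dvd_diff)
    then have "16 dvd (1 + 4*b) - 1" by presburger
    then show "[D*(D - 2*p - 2) = 1] (mod 16)" unfolding N by (simp add: cong_iff_dvd_diff)
  qed simp_all
qed

lemma cong_16_if_Cd_Ql_two_two:
  fixes p q D :: int
  assumes q: "q = p + 2" and p: "odd p" and D: "odd D" and C: "Cd_Ql 2 p q D 2"
  shows "[D*(D - 2*p - 2) = 1] (mod 16)"
proof -
  let ?G = "[D*(D - 2*p - 2) = 1] (mod 16)"
  have F: "quartic_form p q D 2 X Y = 2^2 * ((D*X^2 - (p+1)*Y^2)^2 - p*q*Y^4)" for X Y
    using quartic_form_twin[OF q, where d=2 and A=D] by simp
  have odd_unit_part: "forces_at 2 2 (quartic_form p q D 2 X Y) ?G"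
    if "odd ((D*X^2 - (p+1)*Y^2)^2 - p*q*Y^4)" for X Y
    using forces_at_odd_valuation[where e=1 and c=1 and h=2, OF _ _ _ F] that by simp
  show ?G
  proof (rule Cd_QlE[where e=1 and c=1, OF _ C])
    fix X
    show "forces_at 2 2 (quartic_form p q D 2 X 1) ?G"
    proof (cases "even X")
      case True
      then show ?thesis using p q D by (intro odd_unit_part) auto
    next
      case False
      then show ?thesis using forces_at_cong_16[OF q p D] F by simp
    qed
  next
    fix X :: int and j :: nat
    assume "\<not> 2 dvd X" "1 \<le> j"
    then show "forces_at 2 2 (quartic_form p q D 2 X (2^j)) ?G"
      using p q D by (intro odd_unit_part) auto
  qed auto
qed

lemma Cd_Ql_two_two_if_cong_16:
  fixes p q D :: int
  assumes q: "q = p + 2" and h: "[D*(D - 2*p - 2) = 1] (mod 16)"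
  shows "Cd_Ql 2 p q D 2"
proof -
  obtain n where n: "D*(D - 2*p - 2) = 1 + 16*n"
    using h unfolding cong_iff_dvd_diff by (metis dvdE diff_eq_eq add.commute)
  have "odd (1 + 8*n)" "[1^2 = 1 + 8*n] (mod 8)" by (simp_all add: cong_iff_dvd_diff)
  from ladic_sqrt_two[OF this] obtain S where "ladic_seq 2 S" "\<forall>k. [(S k)^2 = 1 + 8*n] (mod 2^k)"
    by blast
  moreover have "quartic_form p q D 2 1 1 = 2^2 * ((D - (p+1))^2 - p*q)"
    using quartic_form_twin[OF q, where d=2 and A=D and X=1 and Y=1] by simp
  then have "quartic_form p q D 2 1 1 = 2^2 * (D*(D - 2*p - 2) + 1)"
    unfolding q by (simp add: power2_eq_square algebra_simps)
  then have "2 * 2^2 * (1 + 8*n) = quartic_form p q D 2 1 1" unfolding n by simp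
  ultimately show ?thesis by (rule Cd_QlI_affine)
qed

lemma forces_at_cong_4:
  fixes r k :: int
  assumes r: "odd r" and k: "4 dvd k - 1" and h: "h \<le> 7"
  shows "forces_at 2 r (2^h * (r^2 * k)) ([r = 1] (mod 4))"
proof (rule forces_atI[where e=0 and c=r, OF _ _ _ refl _ h])
  have "2 dvd k - 1" using k by (rule dvd_trans[rotated]) simp
  then show "\<not> 2 dvd r^2 * k" using r by simp
next
  assume "\<exists>w. \<not> 2 dvd w \<and> [r * w^2 = r^2 * k] (mod 2^3)"
  then obtain w where "odd w" and w: "8 dvd r * w^2 - r^2 * k" by (auto simp: cong_iff_dvd_diff)
  obtain s where s: "w^2 = 8*s + 1" using odd_square_mod_8[OF \<open>odd w\<close>] .
  obtain t where t: "r^2 = 8*t + 1" using odd_square_mod_8[OF r] .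
  obtain b where b: "k = 4*b + 1" using k by (metis dvdE diff_eq_eq add.commute)
  have "r * w^2 - r^2 * k = (r - 1) + 4*(2*r*s - 8*t*b - 2*t - b)"
    unfolding s t b by (simp add: algebra_simps)
  moreover have "4 dvd r * w^2 - r^2 * k" using w by (rule dvd_trans[rotated]) simp
  ultimately have "4 dvd (r - 1) + 4*(2*r*s - 8*t*b - 2*t - b)" by simp
  then show "[r = 1] (mod 4)" by (simp add: cong_iff_dvd_diff dvd_add_left_iff)
qed (use r in simp_all)

lemma cong_4_if_Cd_Ql_two:
  fixes p q D r R :: int
  assumes q: "q = p + 2" and R: "odd R" and D: "D = r * R" and r: "odd r"
    and C: "Cd_Ql 2 p q D r"
  shows "[r = 1] (mod 4)"
proof -
  have F: "quartic_form p q D r X Y = r^2 * ((2*R*X^2 - (p+1)*Y^2)^2 - p*q*Y^4)" for X Y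
    using quartic_form_twin[OF q, where d=r and A="2*R"] D by simp
  show ?thesis
  proof (rule Cd_QlE[where e=0 and c=r, OF _ C])
    assume "\<exists>w. \<not> 2 dvd w \<and> [w^2 = r] (mod 2^3)"
    then obtain w where "odd w" "8 dvd w^2 - r" by (auto simp: cong_iff_dvd_diff)
    moreover obtain s where "w^2 = 8*s + 1" using odd_square_mod_8[OF \<open>odd w\<close>] .
    ultimately show "[r = 1] (mod 4)" unfolding cong_iff_dvd_diff by presburger
  next
    fix X
    have "(2*R*X^2 - (p+1))^2 - p*q - 1 = 4 * (R*X^2 * (R*X^2 - (p+1)))"
      unfolding q by (simp add: power2_eq_square algebra_simps)
    then have "4 dvd (2*R*X^2 - (p+1))^2 - p*q - 1" by (metis dvd_triv_left)
    from forces_at_cong_4[OF r this, of 0]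
    show "forces_at 2 r (quartic_form p q D r X 1) ([r = 1] (mod 4))" unfolding F by simp
  next
    fix X :: int and j :: nat
    assume "\<not> 2 dvd X" "1 \<le> j"
    define Y :: int where "Y = 2^(j - 1)"
    have Y: "(2::int)^j = 2*Y" unfolding Y_def using \<open>1 \<le> j\<close> by (simp flip: power_Suc)
    define k where "k = (R*X^2 - 2*(p+1)*Y^2)^2 - 4*p*q*Y^4"
    have "odd (R*X^2)" using R \<open>\<not> 2 dvd X\<close> by simp
    then obtain t where t: "(R*X^2)^2 = 8*t + 1" by (rule odd_square_mod_8)
    have "k - 1 = 4 * (2*t - (p+1)*R*X^2*Y^2 + (p+1)^2*Y^4 - p*q*Y^4)"
      unfolding k_def using t by (simp add: power2_eq_square power4_eq_xxxx algebra_simps)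
    then have "4 dvd k - 1" by (metis dvd_triv_left)
    moreover have "quartic_form p q D r X (2^j) = 2^2 * (r^2 * k)"
      unfolding F Y k_def by (simp add: power2_eq_square power4_eq_xxxx algebra_simps)
    ultimately show "forces_at 2 r (quartic_form p q D r X (2^j)) ([r = 1] (mod 4))"
      using forces_at_cong_4[OF r, of k 2] by simp
  qed (use r in auto)
qed

lemma Cd_Ql_two_if_cong_4:
  fixes p q D r R :: int
  assumes q: "q = p + 2" and p: "odd p" and R: "odd R" and D: "D = r * R" and h: "[r = 1] (mod 4)"
  shows "Cd_Ql 2 p q D r"
proof -
  have F: "quartic_form p q D r z 1 = r^2 * ((2*R*z^2 - (p+1))^2 - p*q)" for z
    using quartic_form_twin[OF q, where d=r and A="2*R"] D by simp
  obtain n where n: "r = 4*n + 1" using h unfolding cong_iff_dvd_diff by (metis dvdE diff_eq_eq add.commute)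
  show ?thesis
  proof (cases "even n")
    case True
    then have "odd r" "[1^2 = r] (mod 8)" unfolding n cong_iff_dvd_diff by (auto elim!: evenE)
    from ladic_sqrt_two[OF this] obtain S where "ladic_seq 2 S" "\<forall>k. [(S k)^2 = r] (mod 2^k)" by blast
    moreover have "r * 1^2 * r = quartic_form p q D r 0 1"
      using F[of 0] q by (simp add: power2_eq_square algebra_simps)
    ultimately show ?thesis by (rule Cd_QlI_affine)
  next
    case False
    then obtain m where m: "r = 8*m + 5" unfolding n by (auto elim!: oddE)
    define k where "k = (2*R - (p+1))^2 - p*q"
    obtain s where s: "R^2 = 8*s + 1" using odd_square_mod_8[OF R] .
    obtain P where P: "p + 1 = 2*P" using p by (metis dvd_def odd_even_add odd_one)
    have "k = 4*R^2 - 4*R*(p+1) + 1" unfolding k_def q by (simp add: power2_eq_square algebra_simps)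
    then have k: "k = 8*(4*s - P*R) + 5" unfolding s P by (simp add: algebra_simps)
    have "r * k - 1 = 8 * (3 + 5*m + 5*(4*s - P*R) + 8*m*(4*s - P*R))" unfolding m k by (simp add: algebra_simps)
    then have "odd (r*k)" "[1^2 = r*k] (mod 8)"
      unfolding cong_iff_dvd_diff by (simp_all add: m k dvd_diff_commute[of 8 1])
    from ladic_sqrt_two[OF this] obtain S where "ladic_seq 2 S" "\<forall>k'. [(S k')^2 = r*k] (mod 2^k')" by blast
    moreover have "r * 1^2 * (r*k) = quartic_form p q D r 1 1"
      using F[of 1] unfolding k_def by (simp add: power2_eq_square)
    ultimately show ?thesis by (rule Cd_QlI_affine)
  qed
qed

lemma Legendre_pR_qR_if_twin_quartic_root:
  fixes p q r R X :: int
  assumes q: "q = p + 2" and r: "prime r" "r \<noteq> 2"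
    and rR: "\<not> r dvd R" and rp: "\<not> r dvd p" and rq: "\<not> r dvd q"
    and root: "r dvd (2*R*X^2 - (p+1))^2 - p*q"
  shows "Legendre (p*R) r = 1 \<and> Legendre (q*R) r = 1"
proof -
  define k where "k = (2*R*X^2 - (p+1))^2 - p*q"
  have k1: "k - 1 = X * (X * (4*R^2*X^2 - 4*(p+1)*R))"
    unfolding k_def q by (simp add: power2_eq_square algebra_simps)
  have "\<not> r dvd X"
  proof
    assume "r dvd X"
    then have "r dvd k - 1" unfolding k1 by simp
    with root have "r dvd k - (k - 1)" unfolding k_def by (rule dvd_diff)
    then show False using prime_gt_1_int[OF r(1)] by simp
  qed
  then have r2X: "\<not> r dvd 2*X" using prime_not_dvd_two[OF r] r(1) by (simp add: prime_dvd_mult_iff)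
  have kp: "k = (2*R*X^2 - 1)^2 - (p*R)*(2*X)^2" and kq: "k = (2*R*X^2 + 1)^2 - (q*R)*(2*X)^2"
    unfolding k_def q by (simp_all add: power2_eq_square algebra_simps)
  have "Legendre (p*R) r = 1"
    by (rule Legendre_eq_1_if_dvd_diff_squares[OF r(1) _ r2X])
       (use root kp r(1) rp rR in \<open>simp_all add: k_def prime_dvd_mult_iff\<close>)
  moreover have "Legendre (q*R) r = 1"
    by (rule Legendre_eq_1_if_dvd_diff_squares[OF r(1) _ r2X])
       (use root kq r(1) rq rR in \<open>simp_all add: k_def prime_dvd_mult_iff\<close>)
  ultimately show ?thesis ..
qed

lemma Legendre_pR_qR_if_Cd_Ql:
  fixes p q D r R :: int
  assumes q: "q = p + 2" and r: "prime r" "r \<noteq> 2" and D: "D = r * R"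
    and rR: "\<not> r dvd R" and rp: "\<not> r dvd p" and rq: "\<not> r dvd q"
    and C: "Cd_Ql r p q D r"
  shows "Legendre (p*R) r = 1 \<and> Legendre (q*R) r = 1"
proof -
  let ?G = "Legendre (p*R) r = 1 \<and> Legendre (q*R) r = 1"
  have F: "quartic_form p q D r X Y = r^2 * ((2*R*X^2 - (p+1)*Y^2)^2 - p*q*Y^4)" for X Y
    using quartic_form_twin[OF q, where d=r and A="2*R"] D by simp
  have c: "\<not> r dvd 1" using r(1) not_prime_unit by blast
  have odd_valuation: "forces_at r r (r^2 * k) ?G" if "\<not> r dvd k" for k
    using forces_at_odd_valuation[where e=1 and c=1 and h=2, OF r(1) _ c refl that] by simp
  show ?G
  proof (rule Cd_QlE[where e=1 and c=1, OF r(1) C _ c])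
    fix X
    define k where "k = (2*R*X^2 - (p+1))^2 - p*q"
    show "forces_at r r (quartic_form p q D r X 1) ?G"
    proof (cases "r dvd k")
      case False
      then show ?thesis using odd_valuation F unfolding k_def by simp
    next
      case True
      then have ?G using Legendre_pR_qR_if_twin_quartic_root[OF q r rR rp rq] unfolding k_def by blast
      then show ?thesis unfolding forces_at_def by blast
    qed
  next
    fix X :: int and j :: nat
    assume X: "\<not> r dvd X" and j: "1 \<le> j"
    define k where "k = (2*R*X^2 - (p+1)*(r^j)^2)^2 - p*q*(r^j)^4"
    have "k - (2*R*X^2)^2 = r^j * (r^j * ((p+1)^2*(r^j)^2 - 4*R*X^2*(p+1) - p*q*(r^j)^2))"
      unfolding k_def by (simp add: power2_eq_square power4_eq_xxxx algebra_simps)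
    then have "r dvd k - (2*R*X^2)^2" using j by (simp add: dvd_power)
    moreover have "\<not> r dvd (2*R*X^2)^2"
      using X rR prime_not_dvd_two[OF r] r(1) by (simp add: prime_dvd_mult_iff prime_dvd_power_iff)
    ultimately have "\<not> r dvd k" by (rule not_dvd_if_dvd_diff)
    then show "forces_at r r (quartic_form p q D r X (r^j)) ?G"
      using odd_valuation F unfolding k_def by simp
  qed simp_all
qed

text \<open>Writing 2Rz = t1 + t2 + e with t1^2 = pR, t2^2 = qR and e = 0 modulo r, the
  quartic times (2R)^2 becomes (2 t1 t2 + E)^2 - 4 (pR)(qR) with E = 0 modulo r.\<close>

lemma twin_quartic_root_mod_prime:
  fixes p q r R :: int
  assumes q: "q = p + 2" and r: "prime r" "r \<noteq> 2" and rR: "\<not> r dvd R"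
    and Lp: "Legendre (p*R) r = 1" and Lq: "Legendre (q*R) r = 1"
  shows "\<exists>z. r dvd (2*R*z^2 - (p+1))^2 - p*q"
proof -
  obtain t1 t2 where t1: "r dvd t1^2 - p*R" and t2: "r dvd t2^2 - q*R"
    using Lp Lq by (auto simp: Legendre_eq_1_iff cong_iff_dvd_diff)
  have r2R: "\<not> r dvd 2*R" using prime_not_dvd_two[OF r] rR r(1) by (simp add: prime_dvd_mult_iff)
  then have "coprime (2*R) r" using prime_imp_coprime[OF r(1)] coprime_commute by blast
  then obtain i where "[2*R*i = 1] (mod r)" using cong_solve_coprime_int by blast
  then have i: "r dvd 2*R*i - 1" by (simp add: cong_iff_dvd_diff)
  define z where "z = (t1 + t2) * i"
  define e where "e = 2*R*z - (t1 + t2)"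
  define E where "E = (t1^2 - p*R) + (t2^2 - q*R) + e*(2*t1 + 2*t2 + e)"
  have "e = (t1 + t2) * (2*R*i - 1)" unfolding e_def z_def by (simp add: algebra_simps)
  then have "r dvd e" using i by simp
  then have "r dvd E" unfolding E_def using t1 t2 by simp
  have "(2*R)^2 * ((2*R*z^2 - (p+1))^2 - p*q) = E * (4*t1*t2 + E)
      + 4*(t1^2 - p*R)*t2^2 + 4*(t2^2 - q*R)*t1^2 - 4*(t1^2 - p*R)*(t2^2 - q*R)"
    unfolding E_def e_def q by (simp add: power2_eq_square algebra_simps)
  moreover have "r dvd E * (4*t1*t2 + E)" using \<open>r dvd E\<close> by (rule dvd_mult2)
  moreover have "r dvd 4*(t1^2 - p*R)*t2^2" using t1 by (rule dvd_mult2[OF dvd_mult])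
  moreover have "r dvd 4*(t2^2 - q*R)*t1^2" using t2 by (rule dvd_mult2[OF dvd_mult])
  moreover have "r dvd 4*(t1^2 - p*R)*(t2^2 - q*R)" using t1 by (rule dvd_mult2[OF dvd_mult])
  ultimately have "r dvd (2*R)^2 * ((2*R*z^2 - (p+1))^2 - p*q)"
    by (metis dvd_add dvd_diff)
  then have "r dvd (2*R)^2 \<or> r dvd (2*R*z^2 - (p+1))^2 - p*q"
    using r(1) prime_dvd_mult_iff by blast
  then have "r dvd (2*R*z^2 - (p+1))^2 - p*q" using r2R prime_dvd_power[OF r(1)] by blast
  then show ?thesis by blast
qed

lemma newton_step_unit_quotient:
  fixes f :: "int \<Rightarrow> int" and r z0 f' :: int
  assumes r: "prime r" and root: "r dvd f z0" and f': "\<not> r dvd f'"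
    and taylor: "\<And>h. \<exists>E. f (z0 + h) = f z0 + h * f' + h^2 * E"
  shows "\<exists>z u. f z = r * u \<and> [u = 1] (mod r)"
proof -
  obtain m where m: "f z0 = r * m" using root by blast
  have "coprime f' r" using prime_imp_coprime[OF r f'] coprime_commute by blast
  then obtain j where "[f' * j = 1] (mod r)" using cong_solve_coprime_int by blast
  then obtain a where a: "f' * j = 1 + r * a" by (metis cong_iff_dvd_diff dvdE diff_eq_eq add.commute)
  define t where "t = j * (1 - m)"
  obtain E where E: "f (z0 + r*t) = f z0 + r*t*f' + (r*t)^2 * E" using taylor by blast
  have "t * f' = (1 - m) * (f' * j)" unfolding t_def by (simp add: algebra_simps)
  then have tf: "t * f' = (1 - m) * (1 + r * a)" unfolding a .
  have "f (z0 + r*t) = r * (m + t * f' + r * t^2 * E)"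
    unfolding E m by (simp add: power2_eq_square algebra_simps)
  also have "\<dots> = r * (1 + r * (a * (1 - m) + t^2 * E))" unfolding tf by (simp add: algebra_simps)
  finally have "f (z0 + r*t) = r * (1 + r * (a * (1 - m) + t^2 * E))" .
  moreover have "[1 + r * (a * (1 - m) + t^2 * E) = 1] (mod r)" by (simp add: cong_iff_dvd_diff)
  ultimately show ?thesis by blast
qed

lemma twin_quartic_value_r_times_unit_square:
  fixes p q r R z0 :: int
  assumes q: "q = p + 2" and r: "prime r" "r \<noteq> 2"
    and rR: "\<not> r dvd R" and rp: "\<not> r dvd p" and rq: "\<not> r dvd q"
    and root: "r dvd (2*R*z0^2 - (p+1))^2 - p*q"
  shows "\<exists>z u. (2*R*z^2 - (p+1))^2 - p*q = r * u \<and> [u = 1] (mod r)"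
proof -
  define f where "f z = (2*R*z^2 - (p+1))^2 - p*q" for z
  define V where "V = 2*R*z0^2 - (p+1)"
  have f1: "f z0 - 1 = z0 * (z0 * (4*R^2*z0^2 - 4*(p+1)*R))"
    unfolding f_def q by (simp add: power2_eq_square algebra_simps)
  have "\<not> r dvd z0"
  proof
    assume "r dvd z0"
    then have "r dvd f z0 - 1" unfolding f1 by simp
    with root have "r dvd f z0 - (f z0 - 1)" unfolding f_def by (rule dvd_diff)
    then show False using prime_gt_1_int[OF r(1)] by simp
  qed
  moreover have "\<not> r dvd V"
  proof
    assume "r dvd V"
    then have "r dvd V^2 - f z0" using root unfolding f_def by (simp add: power2_eq_square)
    then show False using rp rq r(1) unfolding f_def V_def by (simp add: prime_dvd_mult_iff)
  qed
  moreover have "\<not> r dvd 8"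
  proof
    assume "r dvd 8"
    then have "r dvd 2^3" by simp
    then show False using prime_not_dvd_two[OF r] prime_dvd_power[OF r(1)] by blast
  qed
  ultimately have "\<not> r dvd 8*R*z0*V" using rR r(1) by (simp add: prime_dvd_mult_iff)
  moreover have "f (z0 + h) = f z0 + h * (8*R*z0*V) + h^2 * (4*R*V + (4*R*z0 + 2*R*h)^2)" for h
    unfolding f_def V_def by (simp add: power2_eq_square algebra_simps)
  ultimately show ?thesis
    using newton_step_unit_quotient[where f=f, OF r(1)] root unfolding f_def by blast
qed

lemma Cd_Ql_if_Legendre_pR_qR:
  fixes p q D r R :: int
  assumes q: "q = p + 2" and r: "prime r" "r \<noteq> 2" and D: "D = r * R"
    and rR: "\<not> r dvd R" and rp: "\<not> r dvd p" and rq: "\<not> r dvd q"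
    and Lp: "Legendre (p*R) r = 1" and Lq: "Legendre (q*R) r = 1"
  shows "Cd_Ql r p q D r"
proof -
  obtain z0 where "r dvd (2*R*z0^2 - (p+1))^2 - p*q"
    using twin_quartic_root_mod_prime[OF q r rR Lp Lq] by blast
  then obtain z u where z: "(2*R*z^2 - (p+1))^2 - p*q = r * u" and u: "[u = 1] (mod r)"
    using twin_quartic_value_r_times_unit_square[OF q r rR rp rq] by blast
  have "\<not> r dvd u"
  proof
    assume "r dvd u"
    moreover have "r dvd u - 1" using u by (simp add: cong_iff_dvd_diff)
    ultimately have "r dvd u - (u - 1)" by (rule dvd_diff)
    then show False using prime_gt_1_int[OF r(1)] by simp
  qed
  moreover have "[1^2 = u] (mod r)" using u by (simp add: cong_sym)
  ultimately obtain S where "ladic_seq r S" "\<forall>k. [(S k)^2 = u] (mod r^k)"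
    using ladic_sqrt_odd[OF r] by blast
  moreover have "r * r^2 * u = quartic_form p q D r z 1"
    using quartic_form_twin[OF q, where d=r and A="2*R" and X=z and Y=1] D z
    by (simp add: power2_eq_square)
  ultimately show ?thesis by (rule Cd_QlI_affine)
qed

lemma not_Cd_R_if_negative:
  fixes p q D d :: int
  assumes "p + q \<ge> 0" "D \<ge> 0" "d < 0"
  shows "\<not> Cd_R p q D d"
proof -
  have "of_int d * w^2 < of_int d ^ 2 - 2 * of_int (p+q) * of_int D * of_int d * z^2
          + 4 * of_int D ^ 2 * z^4" for w z :: real
  proof -
    have "of_int d * w^2 \<le> (0::real)" using assms(3) by (simp add: mult_nonpos_nonneg)
    moreover have "(0::real) < of_int d ^ 2" using assms(3) by simp
    moreover have "0 \<le> 2 * of_int (p+q) * of_int D * (- of_int d) * (z^2::real)"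
      using assms by (intro mult_nonneg_nonneg) auto
    moreover have "0 \<le> 4 * of_int D ^ 2 * (z^4::real)" by simp
    ultimately show ?thesis by linarith
  qed
  then show ?thesis unfolding Cd_R_def using assms(3) by (auto simp: less_le)
qed

locale twin_prime_setup =
  fixes p q D :: int and Ds :: "int list"
  assumes prime_p: "prime p" and prime_q: "prime q" and odd_p: "odd p" and odd_q: "odd q"
    and twin: "q - p = 2"
    and distinct_Ds: "distinct Ds" and primes_Ds: "\<forall>r \<in> set Ds. prime r"
    and D_eq: "D = prod_list Ds"
    and D_odd: "\<not> 2 dvd D" and p_not_dvd_D: "\<not> p dvd D" and q_not_dvd_D: "\<not> q dvd D"
begin

lemma q_eq: "q = p + 2"
  using twin by simp

lemma D_eq_prod_set: "D = \<Prod>(set Ds)"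
  using D_eq distinct_Ds by (simp add: prod.distinct_set_conv_list)

lemma D_pos: "D > 0"
  unfolding D_eq_prod_set using primes_Ds by (intro prod_pos) (auto simp: prime_gt_0_int)

lemma prime_square_not_dvd_D:
  assumes "prime l"
  shows "\<not> l^2 dvd D"
proof -
  have "squarefree D"
    unfolding D_eq_prod_set using primes_Ds
    by (intro squarefree_prod_coprime) (auto simp: primes_coprime squarefree_prime)
  then show ?thesis using assms squarefreeD not_prime_unit by blast
qed

lemma prime_dvd_pq:
  assumes "prime l" "l dvd p*q"
  shows "(l = p \<or> l = q) \<and> \<not> l^2 dvd p*q \<and> \<not> l dvd D"
proof -
  have pq: "l = p \<or> l = q"
    using assms prime_p prime_q by (auto simp: prime_dvd_mult_iff primes_dvd_imp_eq)
  have "\<not> p dvd q" "\<not> q dvd p"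
    using primes_dvd_imp_eq[OF prime_p prime_q] primes_dvd_imp_eq[OF prime_q prime_p] q_eq by auto
  have "\<not> l^2 dvd p*q"
  proof
    assume h: "l^2 dvd p*q"
    from pq show False
    proof
      assume "l = p"
      then have "p * p dvd p * q" using h by (simp add: power2_eq_square)
      then show False using \<open>\<not> p dvd q\<close> prime_p by (simp add: prime_gt_0_int)
    next
      assume "l = q"
      then have "q * q dvd q * p" using h by (simp add: power2_eq_square mult.commute)
      then show False using \<open>\<not> q dvd p\<close> prime_q by (simp add: prime_gt_0_int)
    qed
  qed
  then show ?thesis using pq p_not_dvd_D q_not_dvd_D by blast
qed

lemma prime_gt_2_if_dvd_pqD:
  assumes "prime l" "l dvd p*q*D"
  shows "l > 2"
proof -
  have "l \<noteq> 2" using assms odd_p odd_q D_odd by auto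
  then show ?thesis using prime_ge_2_int[OF assms(1)] by simp
qed

lemma not_Selmer_phi:
  assumes "QS2 p q Ds d" and "d < 0 \<or> p dvd d \<or> q dvd d"
  shows "\<not> Selmer_phi p q Ds d"
proof
  assume S: "Selmer_phi p q Ds d"
  have sq: "\<not> l^2 dvd d" if "prime l" for l
    using assms(1) that unfolding QS2_def squarefree_def by (metis not_prime_unit)
  have "p \<noteq> 2" "q \<noteq> 2" using odd_p odd_q by auto
  consider "d < 0" | "p dvd d" | "q dvd d" using assms(2) by blast
  then show False
  proof cases
    case 1
    then have "\<not> Cd_R p q D d"
      using not_Cd_R_if_negative prime_gt_0_int[OF prime_p] prime_gt_0_int[OF prime_q] D_pos by simp
    then show False using S D_eq unfolding Selmer_phi_def by simp
  next
    case 2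
    then have "\<not> Cd_Ql p p q D d"
      using not_Cd_Ql_if_exactly_divides[OF prime_p \<open>p \<noteq> 2\<close> _ sq[OF prime_p] p_not_dvd_D] by blast
    then show False using S D_eq unfolding Selmer_phi_def by simp
  next
    case 3
    then have "\<not> Cd_Ql q p q D d"
      using not_Cd_Ql_if_exactly_divides[OF prime_q \<open>q \<noteq> 2\<close> _ sq[OF prime_q] q_not_dvd_D] by blast
    then show False using S D_eq unfolding Selmer_phi_def by simp
  qed
qed

lemma Cd_Ql_two_two_iff: "Cd_Ql 2 p q D 2 \<longleftrightarrow> [D * (D - 2*p - 2) = 1] (mod 16)"
  using cong_16_if_Cd_Ql_two_two[OF q_eq odd_p] Cd_Ql_two_two_if_cong_16[OF q_eq] D_odd by blast

lemma Cd_Ql_two_iff_Legendre: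
  assumes l: "prime l" "l dvd p*q*D"
  shows "Cd_Ql l p q D 2 \<longleftrightarrow> Legendre 2 l = 1"
proof -
  have l2: "l \<noteq> 2" "\<not> l dvd 2" using prime_gt_2_if_dvd_pqD[OF l] zdvd_imp_le[of l 2] by auto
  have "(l dvd p*q \<and> \<not> l^2 dvd p*q \<and> \<not> l dvd D) \<or> (l dvd D \<and> \<not> l^2 dvd D \<and> \<not> l dvd p*q)"
    using prime_dvd_pq[OF l(1)] prime_square_not_dvd_D[OF l(1)] l by (auto simp: prime_dvd_mult_iff)
  then show ?thesis
    using Legendre_eq_1_if_Cd_Ql[where A=D, OF l(1) l2(2) q_eq] Cd_Ql_if_Legendre[OF l(1) l2(1)] by auto
qed

context
  fixes r :: int
  assumes r: "r \<in> set Ds"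
begin

lemma prime_r: "prime r"
  using r primes_Ds by blast

lemma D_eq_r_times: "D = r * (D div r)"
  using prod_list_dvd[OF r] D_eq by simp

lemma odd_r_and_cofactor: "odd r" "odd (D div r)"
  using D_eq_r_times D_odd by (metis even_mult_iff)+

lemma r_ne_2: "r \<noteq> 2"
  using odd_r_and_cofactor(1) by auto

lemma r_not_dvd: "\<not> r dvd D div r" "\<not> r dvd p" "\<not> r dvd q"
proof -
  show "\<not> r dvd D div r"
    using prime_square_not_dvd_D[OF prime_r] D_eq_r_times by (metis mult_dvd_mono dvd_refl power2_eq_square)
  show "\<not> r dvd p" "\<not> r dvd q"
    using prod_list_dvd[OF r] D_eq p_not_dvd_D q_not_dvd_D prime_r prime_p prime_q
    by (metis primes_dvd_imp_eq)+
qed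

lemma Cd_Ql_two_r_iff: "Cd_Ql 2 p q D r \<longleftrightarrow> [r = 1] (mod 4)"
  using cong_4_if_Cd_Ql_two[OF q_eq odd_r_and_cofactor(2) D_eq_r_times odd_r_and_cofactor(1)]
    Cd_Ql_two_if_cong_4[OF q_eq odd_p odd_r_and_cofactor(2) D_eq_r_times] by blast

lemma Cd_Ql_r_iff_Legendre:
  assumes l: "prime l" "l dvd p*q*(D div r)"
  shows "Cd_Ql l p q D r \<longleftrightarrow> Legendre r l = 1"
proof -
  have "l dvd p*q*D" using l(2) D_eq_r_times by (metis dvd_mult2 mult.assoc mult.commute)
  then have l2: "l \<noteq> 2" "\<not> l dvd 2" using prime_gt_2_if_dvd_pqD[OF l(1)] zdvd_imp_le[of l 2] by auto
  have lR: "l dvd D div r \<Longrightarrow> l dvd D" using D_eq_r_times by (metis dvd_mult2 mult.commute)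
  have "\<not> l^2 dvd 2 * (D div r)"
  proof
    assume "l^2 dvd 2 * (D div r)"
    moreover have "coprime (l^2) 2" using prime_imp_coprime[OF l(1) l2(2)] by simp
    ultimately have "l^2 dvd D div r" by (simp add: coprime_dvd_mult_right_iff)
    then show False using prime_square_not_dvd_D[OF l(1)] D_eq_r_times by (metis dvd_mult)
  qed
  then have cases: "(l dvd p*q \<and> \<not> l^2 dvd p*q \<and> \<not> l dvd 2 * (D div r))
      \<or> (l dvd 2 * (D div r) \<and> \<not> l^2 dvd 2 * (D div r) \<and> \<not> l dvd p*q)"
    using prime_dvd_pq[OF l(1)] l lR l2(2) by (auto simp: prime_dvd_mult_iff)
  have "\<not> l dvd r"
  proof
    assume "l dvd r"
    then have "l = r" using primes_dvd_imp_eq[OF l(1) prime_r] by simp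
    moreover have "\<not> r dvd p*q" using r_not_dvd(2,3) prime_r by (simp add: prime_dvd_mult_iff)
    moreover have "\<not> r dvd 2 * (D div r)"
      using r_ne_2 r_not_dvd(1) prime_r prime_not_dvd_two by (simp add: prime_dvd_mult_iff)
    ultimately show False using cases by auto
  qed
  moreover have "r * (2 * (D div r)) = 2 * D" using D_eq_r_times by simp
  ultimately show ?thesis
    using Legendre_eq_1_if_Cd_Ql[OF l(1) _ q_eq _ cases] Cd_Ql_if_Legendre[OF l(1) l2(1)] by blast
qed

lemma Cd_Ql_r_r_iff:
  "Cd_Ql r p q D r \<longleftrightarrow> Legendre (p * (D div r)) r = 1 \<and> Legendre (q * (D div r)) r = 1"
  using Legendre_pR_qR_if_Cd_Ql[OF q_eq prime_r r_ne_2 D_eq_r_times r_not_dvd]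
    Cd_Ql_if_Legendre_pR_qR[OF q_eq prime_r r_ne_2 D_eq_r_times r_not_dvd] by blast

end

end

theorem proposition2p1:
  fixes p q D :: int and Ds :: "int list"
  assumes "prime p" and "prime q" and "odd p" and "odd q" and "q - p = 2"
    and "distinct Ds" and "\<forall>r \<in> set Ds. prime r"
    and "D = prod_list Ds"
    and "\<not> 2 dvd D" and "\<not> p dvd D" and "\<not> q dvd D"
  shows
    \<comment> \<open>(A)\<close>
    "(\<forall>d. QS2 p q Ds d \<and> (d < 0 \<or> p dvd d \<or> q dvd d) \<longrightarrow> \<not> Selmer_phi p q Ds d)
     \<and> (\<forall>d. QS2 p q Ds d \<and> d > 0 \<longrightarrow> Cd_R p q D d)
     \<comment> \<open>(B)\<close>
     \<and> (Cd_Ql 2 p q D 2 \<longleftrightarrow> [D * (D - 2*p - 2) = 1] (mod 16))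
     \<and> (\<forall>l. prime l \<and> l dvd p * q * D \<longrightarrow>
          (Cd_Ql l p q D 2 \<longleftrightarrow> Legendre 2 l = 1)
          \<and> (Legendre 2 l = 1 \<longleftrightarrow> l mod 8 = 1 \<or> l mod 8 = 7))
     \<comment> \<open>(C)\<close>
     \<and> (\<forall>i < length Ds.
          (Cd_Ql 2 p q D (Ds ! i) \<longleftrightarrow> [Ds ! i = 1] (mod 4))
          \<and> (\<forall>l. prime l \<and> l dvd p * q * (D div Ds ! i) \<longrightarrow>
                 (Cd_Ql l p q D (Ds ! i) \<longleftrightarrow> Legendre (Ds ! i) l = 1))
          \<and> (Cd_Ql (Ds ! i) p q D (Ds ! i) \<longleftrightarrow>
                 Legendre (p * (D div Ds ! i)) (Ds ! i) = 1
                 \<and> Legendre (q * (D div Ds ! i)) (Ds ! i) = 1))"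
proof -
  interpret twin_prime_setup p q D Ds
    using assms by unfold_locales
  have "Ds ! i \<in> set Ds" if "i < length Ds" for i
    using that by simp
  then show ?thesis
    using not_Selmer_phi Cd_Ql_two_two_iff Cd_Ql_two_iff_Legendre
      Legendre_two_iff prime_gt_2_if_dvd_pqD
      Cd_Ql_two_r_iff Cd_Ql_r_iff_Legendre Cd_Ql_r_r_iff
    by (auto simp: Cd_R_def)
qed

end
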